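(* Let $p$ be a prime and let $\Phi_p$ be the set of all $\operatorname{fpt}(R,f)$, where $R$ ranges over $F$-pure rings of characteristic $p$ and $f$ over non-zero non-units of $R$. Let $\lambda\in\Phi_p$ and $e\ge1$. Then the following three statements hold (and are equivalent): (1) $\lfloor (p^e-1)\lambda\rfloor = p^e\langle\lambda\rangle_e$; (2) $\lambda\le p^e\,\langle\lambda\rangle^e$; (3) $\lambda\ge \frac{p^e}{p^e-1}\langle\lambda\rangle_e$.
   Context: A ring $R$ of characteristic $p$ is $F$-pure if $R\subseteq R^{1/p}$ splits as a map of $R$-modules. Roots and splitting. $R^{1/p^e}$ is the ring of formal $p^e$-th roots of elements of $R$, containing $R$ via $r\mapsto(r^{p^e})^{1/p^e}$. We write $f^{a/p^e}:=(f^a)^{1/p^e}$. The inclusion $R\cdot t\subseteq R^{1/p^e}$ splits if some $R$-linear $\theta:R^{1/p^e}\to R$ has $\theta(t)=1$. $F$-pure threshold. $(R,f^\lambda)$ is $F$-pure if $R\cdot f^{\lfloor (p^e-1)\lambda\rfloor/p^e}\subseteq R^{1/p^e}$ splits for all $e\ge1$. $\operatorname{fpt}(R,f)$ is the supremum of all $\lambda\ge0$ with $(R,f^\lambda)$ $F$-pure; it lies in $[0,1]$. Truncations and tails. For $\alpha\in(0,1]$ with non-terminating base $p$ expansion $\alpha=\sum_{e\ge1}a_e/p^e$ (digits $0\le a_e\le p-1$, not all eventually zero): - the $e$-th truncation is $\langle\alpha\rangle_e:=\sum_{i=1}^e a_i/p^i$; - the $e$-th tail is $\langle\alpha\rangle^e:=\alpha-\langle\alpha\rangle_e$.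 By convention $\langle0\rangle_e=\langle0\rangle^e=0$. *)

theory Defs
  imports Complex_Main "HOL-Computational_Algebra.Primes"
begin

text \<open>Splitting of R t in R^{1/p^e}. An element of R^{1/p^e} is x^{1/p^e} with x in R;
  we represent it by x. An R-linear map theta from R^{1/p^e} to R is then an additive map
  theta on R with theta(r^(p^e) * x) = r * theta(x), since r acts on x^{1/p^e} as
  (r^(p^e) x)^{1/p^e}.\<close>

definition frob_splits :: "nat \<Rightarrow> nat \<Rightarrow> 'a::comm_ring_1 \<Rightarrow> bool" where
  "frob_splits p e x \<longleftrightarrow>
     (\<exists>\<theta>::'a \<Rightarrow> 'a. (\<forall>u v. \<theta> (u + v) = \<theta> u + \<theta> v)
        \<and> (\<forall>r u. \<theta> (r ^ (p ^ e) * u) = r * \<theta> u)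
        \<and> \<theta> x = 1)"

definition F_pure_ring :: "nat \<Rightarrow> 'a::comm_ring_1 itself \<Rightarrow> bool" where
  "F_pure_ring p _ \<longleftrightarrow> frob_splits p 1 (1::'a)"

definition F_pure_pair :: "nat \<Rightarrow> 'a::comm_ring_1 \<Rightarrow> real \<Rightarrow> bool" where
  "F_pure_pair p f lam \<longleftrightarrow>
     (\<forall>e\<ge>1. frob_splits p e (f ^ nat \<lfloor>(real p ^ e - 1) * lam\<rfloor>))"

definition fpt :: "nat \<Rightarrow> 'a::comm_ring_1 \<Rightarrow> real" where
  "fpt p f = Sup {lam. lam \<ge> 0 \<and> F_pure_pair p f lam}"

text \<open>a is the digit sequence (a 1, a 2, ...) of a non-terminating base p expansion of alpha;
  a 0 is unused and fixed to 0.\<close>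
definition nonterm_digits :: "nat \<Rightarrow> real \<Rightarrow> (nat \<Rightarrow> nat) \<Rightarrow> bool" where
  "nonterm_digits p \<alpha> a \<longleftrightarrow> a 0 = 0 \<and> (\<forall>i. a i \<le> p - 1)
     \<and> (\<forall>N. \<exists>i>N. a i \<noteq> 0)
     \<and> (\<lambda>i. real (a (Suc i)) / real p ^ Suc i) sums \<alpha>"

definition truncation :: "nat \<Rightarrow> real \<Rightarrow> nat \<Rightarrow> real" where
  "truncation p \<alpha> e =
     (if \<alpha> = 0 then 0
      else (let a = (THE a. nonterm_digits p \<alpha> a) in
            \<Sum>i=1..e. real (a i) / real p ^ i))"

definition tail :: "nat \<Rightarrow> real \<Rightarrow> nat \<Rightarrow> real" where
  "tail p \<alpha> e = (if \<alpha> = 0 then 0 else \<alpha> - truncation p \<alpha> e)"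

end

theory Submission
  imports Defs
begin

text \<open>Let \<open>\<nu>(e)\<close> be the largest \<open>a\<close> for which \<open>R \<cdot> f\<^bsup>a/p\<^sup>e\<^esup> \<subseteq> R\<^bsup>1/p\<^sup>e\<^esup>\<close> splits; it is
  below \<open>p\<^sup>e\<close> because \<open>f\<close> is not a unit. Composing splittings gives
  \<open>\<nu>(e) p\<^sup>d + \<nu>(d) \<le> \<nu>(e + d)\<close>, and taking \<open>p\<^sup>k\<close>-th roots gives \<open>\<nu>(e + k) div p\<^sup>k \<le> \<nu>(e)\<close>.
  Hence every \<open>\<nu>(m)/p\<^sup>m\<close> is an F-pure exponent and every F-pure exponent \<open>\<mu>\<close> satisfies
  \<open>p\<^sup>e \<mu> \<le> \<nu>(e) + 1\<close>, so that
  \<open>\<nu>(e) \<le> (p\<^sup>e - 1) fpt \<le> p\<^sup>e fpt \<le> \<nu>(e) + 1\<close>.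
  For \<open>fpt > 0\<close> this forces \<open>\<lceil>p\<^sup>e fpt\<rceil> = \<nu>(e) + 1\<close>, i.e.
  \<open>p\<^sup>e \<langle>fpt\<rangle>\<^sub>e = \<nu>(e) = \<lfloor>(p\<^sup>e - 1) fpt\<rfloor>\<close>, and all three statements follow.\<close>

lemma nonterm_digits_tail_bounds:
  assumes p2: "p \<ge> 2" and nd: "nonterm_digits p \<alpha> b"
  shows "0 < \<alpha> - (\<Sum>i=1..n. real (b i) / real p ^ i)"
    and "\<alpha> - (\<Sum>i=1..n. real (b i) / real p ^ i) \<le> 1 / real p ^ n"
proof -
  define g where "g i = real (b (Suc i)) / real p ^ Suc i" for i
  have gs: "g sums \<alpha>" using nd unfolding nonterm_digits_def g_def by simp
  have summ: "summable (\<lambda>j. g (j + n))"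
    using sums_summable[OF gs] by (simp add: summable_iff_shift)
  have tail: "\<alpha> - (\<Sum>i=1..n. real (b i) / real p ^ i) = (\<Sum>j. g (j + n))"
    using suminf_split_initial_segment[OF sums_summable[OF gs], of n] sums_unique[OF gs]
    by (simp add: g_def sum.atLeast1_atMost_eq)
  have pp: "real p > 1" using p2 by simp
  obtain i where i: "i > n" "b i \<noteq> 0" using nd unfolding nonterm_digits_def by blast
  have "0 < g ((i - Suc n) + n)" unfolding g_def using i p2 by (simp add: Suc_diff_Suc)
  then have "0 < (\<Sum>j. g (j + n))"
    by (intro suminf_pos2[OF summ]) (auto simp: g_def)
  then show "0 < \<alpha> - (\<Sum>i=1..n. real (b i) / real p ^ i)" using tail by simp
  define h where "h j = (real p - 1) / real p ^ Suc n * (1 / real p) ^ j" for j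
  have hs: "h sums ((real p - 1) / real p ^ Suc n * (1 / (1 - 1 / real p)))"
    unfolding h_def by (intro sums_mult geometric_sums) (use pp in simp)
  have gh: "g (j + n) \<le> h j" for j
  proof -
    have "real (b (Suc (j + n))) \<le> real p - 1"
      using nd p2 unfolding nonterm_digits_def by (metis of_nat_1 of_nat_diff of_nat_mono le_trans one_le_numeral)
    then have "g (j + n) \<le> (real p - 1) / real p ^ Suc (j + n)"
      unfolding g_def by (simp add: divide_right_mono)
    also have "\<dots> = h j"
      unfolding h_def using pp by (simp add: power_add power_divide field_simps)
    finally show ?thesis .
  qed
  have "(\<Sum>j. g (j + n)) \<le> suminf h" by (rule suminf_le[OF gh summ sums_summable[OF hs]])
  also have "suminf h = 1 / real p ^ n"
  proof -
    have "(real p - 1) / real p ^ Suc n * (1 / (1 - 1 / real p)) = 1 / real p ^ n"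
      using pp by (simp add: field_simps)
    then show ?thesis using sums_unique[OF hs] by simp
  qed
  finally show "\<alpha> - (\<Sum>i=1..n. real (b i) / real p ^ i) \<le> 1 / real p ^ n" using tail by simp
qed

lemma scaled_digit_sum:
  assumes "p > 0"
  shows "real p ^ n * (\<Sum>i=1..n. real (b i) / real p ^ i) = real (\<Sum>i=1..n. b i * p ^ (n - i))"
  unfolding sum_distrib_left of_nat_sum
proof (rule sum.cong)
  fix i assume "i \<in> {1..n}"
  then have "real p ^ n = real p ^ (n - i) * real p ^ i"
    by (simp flip: power_add)
  then show "real p ^ n * (real (b i) / real p ^ i) = real (b i * p ^ (n - i))"
    using assms by simp
qed simp

lemma nonterm_digits_partial_sum:
  assumes p2: "p \<ge> 2" and nd: "nonterm_digits p \<alpha> b"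
  shows "(\<Sum>i=1..n. real (b i) / real p ^ i) = of_int (\<lceil>real p ^ n * \<alpha>\<rceil> - 1) / real p ^ n"
proof -
  define T where "T = (\<Sum>i=1..n. real (b i) / real p ^ i)"
  define N where "N = (\<Sum>i=1..n. b i * p ^ (n - i))"
  have ppos: "real p ^ n > 0" using p2 by simp
  have "real p ^ n * \<alpha> = real N + real p ^ n * (\<alpha> - T)"
    using scaled_digit_sum[of p n b] p2 unfolding T_def N_def by (simp add: algebra_simps)
  moreover have "0 < real p ^ n * (\<alpha> - T)" "real p ^ n * (\<alpha> - T) \<le> 1"
    using nonterm_digits_tail_bounds[OF p2 nd, of n] ppos unfolding T_def
    by (simp_all add: field_simps)
  ultimately have "\<lceil>real p ^ n * \<alpha>\<rceil> = int N + 1"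
    by (intro ceiling_unique) auto
  moreover have "real p ^ n * T = real N"
    using scaled_digit_sum[of p n b] p2 unfolding T_def N_def by simp
  ultimately show ?thesis unfolding T_def[symmetric] using ppos by (simp add: field_simps)
qed

lemma nonterm_digits_unique:
  assumes p2: "p \<ge> 2" and "nonterm_digits p \<alpha> a" "nonterm_digits p \<alpha> b"
  shows "a = b"
proof
  fix i
  show "a i = b i"
  proof (cases i)
    case 0 then show ?thesis using assms unfolding nonterm_digits_def by simp
  next
    case (Suc m)
    have "(\<Sum>i=1..Suc m. real (a i) / real p ^ i) = (\<Sum>i=1..Suc m. real (b i) / real p ^ i)"
      "(\<Sum>i=1..m. real (a i) / real p ^ i) = (\<Sum>i=1..m. real (b i) / real p ^ i)"
      by (simp_all only: nonterm_digits_partial_sum[OF p2 assms(2)] nonterm_digits_partial_sum[OF p2 assms(3)])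
    then show ?thesis using Suc p2 by simp
  qed
qed

definition lower_approx :: "nat \<Rightarrow> real \<Rightarrow> nat \<Rightarrow> int" where
  "lower_approx p \<alpha> n = \<lceil>real p ^ n * \<alpha>\<rceil> - 1"

definition ceiling_digits :: "nat \<Rightarrow> real \<Rightarrow> nat \<Rightarrow> nat" where
  "ceiling_digits p \<alpha> i =
     (if i = 0 then 0 else nat (lower_approx p \<alpha> i - int p * lower_approx p \<alpha> (i - 1)))"

lemma lower_approx_bounds:
  fixes p :: nat and \<alpha> :: real and n :: nat
  shows "of_int (lower_approx p \<alpha> n) < real p ^ n * \<alpha>"
  "real p ^ n * \<alpha> \<le> of_int (lower_approx p \<alpha> n) + 1"
  unfolding lower_approx_def by linarith+

lemma lower_approx_Suc_bounds:
  assumes "p > 0"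
  shows "int p * lower_approx p \<alpha> n \<le> lower_approx p \<alpha> (Suc n)"
    and "lower_approx p \<alpha> (Suc n) < int p * lower_approx p \<alpha> n + int p"
proof -
  have "real p * of_int (lower_approx p \<alpha> n) < real p ^ Suc n * \<alpha>"
    using lower_approx_bounds(1)[of p \<alpha> n] assms by simp
  also have "\<dots> \<le> of_int (lower_approx p \<alpha> (Suc n)) + 1"
    by (rule lower_approx_bounds(2))
  finally have "of_int (int p * lower_approx p \<alpha> n) < (of_int (lower_approx p \<alpha> (Suc n) + 1) :: real)"
    by simp
  then show "int p * lower_approx p \<alpha> n \<le> lower_approx p \<alpha> (Suc n)"
    by (simp only: of_int_less_iff)
  have "of_int (lower_approx p \<alpha> (Suc n)) < real p * (real p ^ n * \<alpha>)"
    using lower_approx_bounds(1)[of p \<alpha> "Suc n"] by simp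
  also have "\<dots> \<le> real p * (of_int (lower_approx p \<alpha> n) + 1)"
    using lower_approx_bounds(2)[of p n \<alpha>] by (simp add: mult_left_mono)
  finally have "of_int (lower_approx p \<alpha> (Suc n)) < (of_int (int p * lower_approx p \<alpha> n + int p) :: real)"
    by (simp add: algebra_simps)
  then show "lower_approx p \<alpha> (Suc n) < int p * lower_approx p \<alpha> n + int p"
    by (simp only: of_int_less_iff)
qed

lemma sum_ceiling_digits:
  assumes "p > 0" and "0 < \<alpha>" "\<alpha> \<le> 1"
  shows "(\<Sum>i=1..n. real (ceiling_digits p \<alpha> i) / real p ^ i) = of_int (lower_approx p \<alpha> n) / real p ^ n"
proof (induction n)
  case 0
  have "lower_approx p \<alpha> 0 = 0" unfolding lower_approx_def using assms by (simp add: ceiling_unique)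
  then show ?case by simp
next
  case (Suc n)
  have "real (ceiling_digits p \<alpha> (Suc n))
      = of_int (lower_approx p \<alpha> (Suc n)) - real p * of_int (lower_approx p \<alpha> n)"
    unfolding ceiling_digits_def using lower_approx_Suc_bounds(1)[OF assms(1), of \<alpha> n] by simp
  then show ?case using Suc assms(1) by (simp add: field_simps)
qed

lemma lower_approx_tendsto:
  assumes "p \<ge> 2"
  shows "(\<lambda>n. of_int (lower_approx p \<alpha> n) / real p ^ n) \<longlonglongrightarrow> \<alpha>"
proof (rule tendsto_sandwich[where f = "\<lambda>n. \<alpha> - inverse (real p ^ n)" and h = "\<lambda>_. \<alpha>"])
  have pp: "real p > 1" using assms by simp
  have "\<alpha> - inverse (real p ^ n) \<le> of_int (lower_approx p \<alpha> n) / real p ^ n"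
    "of_int (lower_approx p \<alpha> n) / real p ^ n \<le> \<alpha>" for n
  proof -
    have pos: "real p ^ n > 0" using pp by simp
    have "\<alpha> - inverse (real p ^ n) = (real p ^ n * \<alpha> - 1) / real p ^ n"
      using pos by (simp add: field_simps)
    also have "\<dots> \<le> of_int (lower_approx p \<alpha> n) / real p ^ n"
      using lower_approx_bounds(2)[of p n \<alpha>] pos by (simp add: divide_right_mono)
    finally show "\<alpha> - inverse (real p ^ n) \<le> of_int (lower_approx p \<alpha> n) / real p ^ n" .
    show "of_int (lower_approx p \<alpha> n) / real p ^ n \<le> \<alpha>"
      using lower_approx_bounds(1)[of p \<alpha> n] pos by (simp add: pos_divide_le_eq mult.commute)
  qed
  then show "\<forall>\<^sub>F n in sequentially. \<alpha> - inverse (real p ^ n) \<le> of_int (lower_approx p \<alpha> n) / real p ^ n"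
    "\<forall>\<^sub>F n in sequentially. of_int (lower_approx p \<alpha> n) / real p ^ n \<le> \<alpha>"
    by simp_all
  show "(\<lambda>n. \<alpha> - inverse (real p ^ n)) \<longlonglongrightarrow> \<alpha>"
    using tendsto_diff[OF tendsto_const LIMSEQ_inverse_realpow_zero[OF pp]] by simp
qed simp

text \<open>Otherwise the truncations \<open>lower_approx p \<alpha> n / p\<^sup>n\<close> would be eventually constant, while they
  tend to \<open>\<alpha>\<close> from strictly below.\<close>
lemma ceiling_digits_nonterminating:
  assumes p2: "p \<ge> 2" and "0 < \<alpha>" "\<alpha> \<le> 1"
  shows "\<exists>i>N. ceiling_digits p \<alpha> i \<noteq> 0"
proof (rule ccontr)
  assume "\<not> (\<exists>i>N. ceiling_digits p \<alpha> i \<noteq> 0)"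
  then have zero: "ceiling_digits p \<alpha> (Suc n) = 0" if "n \<ge> N" for n
    using that le_imp_less_Suc by blast
  have p0: "p > 0" using p2 by simp
  note sums = sum_ceiling_digits[OF p0 assms(2,3)]
  have const: "of_int (lower_approx p \<alpha> n) / real p ^ n = of_int (lower_approx p \<alpha> N) / real p ^ N"
    if "n \<ge> N" for n
    using that
  proof (induction n rule: dec_induct)
    case (step n)
    have "of_int (lower_approx p \<alpha> (Suc n)) / real p ^ Suc n
        = (\<Sum>i=1..Suc n. real (ceiling_digits p \<alpha> i) / real p ^ i)"
      by (rule sums[symmetric])
    also have "\<dots> = (\<Sum>i=1..n. real (ceiling_digits p \<alpha> i) / real p ^ i)"
      using zero[OF step.hyps(1)] by simp
    also have "\<dots> = of_int (lower_approx p \<alpha> n) / real p ^ n"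
      by (rule sums)
    finally show ?case using step.IH by (simp only:)
  qed simp
  have "\<alpha> \<le> of_int (lower_approx p \<alpha> N) / real p ^ N"
    using LIMSEQ_le_const2[OF lower_approx_tendsto[OF p2]] const by (metis order.refl)
  then show False
    using lower_approx_bounds(1)[of p \<alpha> N] p0 by (simp add: pos_le_divide_eq mult.commute)
qed

lemma nonterm_digits_ceiling_digits:
  assumes p2: "p \<ge> 2" and "0 < \<alpha>" "\<alpha> \<le> 1"
  shows "nonterm_digits p \<alpha> (ceiling_digits p \<alpha>)"
  unfolding nonterm_digits_def
proof (intro conjI allI)
  have p0: "p > 0" using p2 by simp
  note sums = sum_ceiling_digits[OF p0 assms(2,3)]
  show "ceiling_digits p \<alpha> 0 = 0" unfolding ceiling_digits_def by simp
  show "ceiling_digits p \<alpha> i \<le> p - 1" for i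
  proof (cases i)
    case (Suc m)
    then show ?thesis
      using lower_approx_Suc_bounds(2)[OF p0, of \<alpha> m] unfolding ceiling_digits_def by simp
  qed (simp add: ceiling_digits_def)
  show "(\<lambda>i. real (ceiling_digits p \<alpha> (Suc i)) / real p ^ Suc i) sums \<alpha>"
  proof -
    have "(\<lambda>n. \<Sum>i<n. real (ceiling_digits p \<alpha> (Suc i)) / real p ^ Suc i)
        = (\<lambda>n. of_int (lower_approx p \<alpha> n) / real p ^ n)"
      using sums by (simp only: One_nat_def sum.atLeast1_atMost_eq)
    then show ?thesis unfolding sums_def using lower_approx_tendsto[OF p2] by (simp only:)
  qed
  show "\<exists>i>N. ceiling_digits p \<alpha> i \<noteq> 0" for N
    by (rule ceiling_digits_nonterminating[OF assms])
qed

lemma truncation_eq_ceiling: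
  assumes p2: "p \<ge> 2" and pos: "0 < \<alpha>" and le1: "\<alpha> \<le> 1"
  shows "truncation p \<alpha> e = of_int (\<lceil>real p ^ e * \<alpha>\<rceil> - 1) / real p ^ e"
proof -
  have nd: "nonterm_digits p \<alpha> (ceiling_digits p \<alpha>)"
    by (rule nonterm_digits_ceiling_digits[OF assms])
  then have "(THE a. nonterm_digits p \<alpha> a) = ceiling_digits p \<alpha>"
    using nonterm_digits_unique[OF p2] by blast
  then show ?thesis
    unfolding truncation_def using pos nonterm_digits_partial_sum[OF p2 nd] by simp
qed

lemma truncation_floor_eq_of_bounds:
  assumes p2: "p \<ge> 2" and pos: "0 < lam" and le1: "lam \<le> 1"
    and lower: "real s \<le> (real p ^ e - 1) * lam" and upper: "real p ^ e * lam \<le> real s + 1"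
  shows "truncation p lam e = real s / real p ^ e"
    and "\<lfloor>(real p ^ e - 1) * lam\<rfloor> = int s"
proof -
  have "\<lceil>real p ^ e * lam\<rceil> = int s + 1"
    using lower upper pos by (intro ceiling_unique) (auto simp: algebra_simps)
  then show "truncation p lam e = real s / real p ^ e"
    using truncation_eq_ceiling[OF p2 pos le1] by simp
  show "\<lfloor>(real p ^ e - 1) * lam\<rfloor> = int s"
    using lower upper pos by (intro floor_unique) (auto simp: algebra_simps)
qed

lemma frob_splits_pow_le:
  assumes "frob_splits p e ((f::'a::comm_ring_1) ^ a)" and "b \<le> a"
  shows "frob_splits p e (f ^ b)"
proof -
  obtain \<theta> where \<theta>: "\<forall>u v. \<theta> (u + v) = \<theta> u + \<theta> v" "\<forall>r u. \<theta> (r ^ p ^ e * u) = r * \<theta> u"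
      "\<theta> (f ^ a) = 1"
    using assms(1) unfolding frob_splits_def by blast
  show ?thesis unfolding frob_splits_def
  proof (intro exI[of _ "\<lambda>u. \<theta> (f ^ (a - b) * u)"] conjI allI)
    show "\<theta> (f ^ (a - b) * (u + v)) = \<theta> (f ^ (a - b) * u) + \<theta> (f ^ (a - b) * v)" for u v
      using \<theta>(1) by (simp add: distrib_left)
    show "\<theta> (f ^ (a - b) * (r ^ p ^ e * u)) = r * \<theta> (f ^ (a - b) * u)" for r u
      using \<theta>(2) by (metis mult.left_commute)
    show "\<theta> (f ^ (a - b) * f ^ b) = 1"
      using \<theta>(3) assms(2) by (simp flip: power_add)
  qed
qed

lemma frob_splits_pow_imp_unit:
  assumes "frob_splits p e ((f::'a::comm_ring_1) ^ a)" and "p ^ e \<le> a"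
  shows "f dvd 1"
proof -
  obtain \<theta> where \<theta>: "\<forall>r u. \<theta> (r ^ p ^ e * u) = r * \<theta> u" "\<theta> (f ^ a) = 1"
    using assms(1) unfolding frob_splits_def by blast
  have "f ^ a = f ^ p ^ e * f ^ (a - p ^ e)"
    using assms(2) by (simp flip: power_add)
  then have "1 = f * \<theta> (f ^ (a - p ^ e))" using \<theta> by metis
  then show ?thesis by (rule dvdI)
qed

lemma frob_splits_compose:
  assumes "frob_splits p e (x::'a::comm_ring_1)" and "frob_splits p d y"
  shows "frob_splits p (e + d) (x ^ p ^ d * y)"
proof -
  obtain \<theta> where \<theta>: "\<forall>u v. \<theta> (u + v) = \<theta> u + \<theta> v" "\<forall>r u. \<theta> (r ^ p ^ e * u) = r * \<theta> u" "\<theta> x = 1"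
    using assms(1) unfolding frob_splits_def by blast
  obtain \<eta> where \<eta>: "\<forall>u v. \<eta> (u + v) = \<eta> u + \<eta> v" "\<forall>r u. \<eta> (r ^ p ^ d * u) = r * \<eta> u" "\<eta> y = 1"
    using assms(2) unfolding frob_splits_def by blast
  show ?thesis unfolding frob_splits_def
  proof (intro exI[of _ "\<lambda>u. \<theta> (\<eta> u)"] conjI allI)
    show "\<theta> (\<eta> (u + v)) = \<theta> (\<eta> u) + \<theta> (\<eta> v)" for u v
      using \<theta>(1) \<eta>(1) by simp
    show "\<theta> (\<eta> (r ^ p ^ (e + d) * u)) = r * \<theta> (\<eta> u)" for r u
    proof -
      have "r ^ p ^ (e + d) = (r ^ p ^ e) ^ p ^ d" by (simp add: power_add power_mult)
      then show ?thesis using \<theta>(2) \<eta>(2) by simp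
    qed
    show "\<theta> (\<eta> (x ^ p ^ d * y)) = 1"
      using \<theta>(3) \<eta>(2,3) by (metis mult.right_neutral)
  qed
qed

lemma frob_splits_one:
  assumes "F_pure_ring p TYPE('a::comm_ring_1)"
  shows "frob_splits p e (1::'a)"
proof (induction e)
  case 0
  show ?case unfolding frob_splits_def by (intro exI[of _ "\<lambda>u. u"]) simp
next
  case (Suc e)
  from frob_splits_compose[OF Suc assms[unfolded F_pure_ring_def]] show ?case by simp
qed

text \<open>Precompose a splitting with \<open>u \<mapsto> u ^ p ^ k * f ^ (a mod p ^ k)\<close>, which is additive
  by the freshman's dream.\<close>
lemma frob_splits_root:
  assumes "prime p" and "CHAR('a::comm_ring_1) = p" and "frob_splits p (e + k) ((f::'a) ^ a)"
  shows "frob_splits p e (f ^ (a div p ^ k))"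
proof -
  obtain \<theta> where \<theta>: "\<forall>u v. \<theta> (u + v) = \<theta> u + \<theta> v" "\<forall>r u. \<theta> (r ^ p ^ (e + k) * u) = r * \<theta> u"
      "\<theta> (f ^ a) = 1"
    using assms(3) unfolding frob_splits_def by blast
  have frobenius: "(u + v) ^ p ^ k = u ^ p ^ k + v ^ p ^ k" for u v :: 'a
    by (rule freshmans_dream') (use assms(1,2) in auto)
  show ?thesis unfolding frob_splits_def
  proof (intro exI[of _ "\<lambda>u. \<theta> (u ^ p ^ k * f ^ (a mod p ^ k))"] conjI allI)
    show "\<theta> ((u + v) ^ p ^ k * f ^ (a mod p ^ k))
        = \<theta> (u ^ p ^ k * f ^ (a mod p ^ k)) + \<theta> (v ^ p ^ k * f ^ (a mod p ^ k))" for u v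
      using \<theta>(1) by (simp add: frobenius distrib_right)
    show "\<theta> ((r ^ p ^ e * u) ^ p ^ k * f ^ (a mod p ^ k)) = r * \<theta> (u ^ p ^ k * f ^ (a mod p ^ k))"
      for r u
    proof -
      have "(r ^ p ^ e * u) ^ p ^ k * f ^ (a mod p ^ k) = r ^ p ^ (e + k) * (u ^ p ^ k * f ^ (a mod p ^ k))"
        by (simp add: power_mult_distrib power_add mult.assoc flip: power_mult)
      then show ?thesis using \<theta>(2) by simp
    qed
    have "(f ^ (a div p ^ k)) ^ p ^ k * f ^ (a mod p ^ k) = f ^ a"
      by (simp only: div_mult_mod_eq flip: power_mult power_add)
    then show "\<theta> ((f ^ (a div p ^ k)) ^ p ^ k * f ^ (a mod p ^ k)) = 1" using \<theta>(3) by simp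
  qed
qed

definition splitting_number :: "nat \<Rightarrow> 'a::comm_ring_1 \<Rightarrow> nat \<Rightarrow> nat" where
  "splitting_number p f e = (GREATEST a. frob_splits p e (f ^ a))"

context
  fixes p :: nat and f :: "'a::comm_ring_1"
  assumes prime: "prime p" and char: "CHAR('a) = p"
    and F_pure: "F_pure_ring p TYPE('a)" and non_unit: "\<not> f dvd 1"
begin

lemma frob_splits_pow_less: "frob_splits p e (f ^ a) \<Longrightarrow> a < p ^ e"
  using frob_splits_pow_imp_unit non_unit not_less by blast

lemma frob_splits_splitting_number: "frob_splits p e (f ^ splitting_number p f e)"
  unfolding splitting_number_def
  by (rule GreatestI_nat[of _ 0 "p ^ e"])
    (simp add: frob_splits_one[OF F_pure], meson frob_splits_pow_less less_imp_le)

lemma le_splitting_number: "frob_splits p e (f ^ a) \<Longrightarrow> a \<le> splitting_number p f e"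
  unfolding splitting_number_def
  by (rule Greatest_le_nat[of _ _ "p ^ e"]) (use frob_splits_pow_less less_imp_le in blast)+

lemma splitting_number_0: "splitting_number p f 0 = 0"
  using frob_splits_pow_less[OF frob_splits_splitting_number, of 0] by simp

lemma splitting_number_superadditive:
  "splitting_number p f e * p ^ d + splitting_number p f d \<le> splitting_number p f (e + d)"
  using frob_splits_compose[OF frob_splits_splitting_number frob_splits_splitting_number, of e d]
  by (intro le_splitting_number) (simp add: power_mult power_add)

lemma splitting_number_root_le:
  "frob_splits p (e + k) (f ^ a) \<Longrightarrow> a div p ^ k \<le> splitting_number p f e"
  by (rule le_splitting_number, rule frob_splits_root[OF prime char])

lemma scaled_splitting_ratio_less:
  "real p ^ d * (real (splitting_number p f m) / real p ^ m) < real (splitting_number p f d) + 1"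
proof (cases "d \<le> m")
  case True
  let ?q = "p ^ (m - d)"
  have "splitting_number p f m div ?q < splitting_number p f d + 1"
    using True by (simp add: le_imp_less_Suc splitting_number_root_le frob_splits_splitting_number)
  then have "splitting_number p f m < (splitting_number p f d + 1) * ?q"
    using prime_gt_0_nat[OF prime] by (simp add: div_less_iff_less_mult)
  then have "real (splitting_number p f m) < real ((splitting_number p f d + 1) * ?q)"
    by (simp only: of_nat_less_iff)
  moreover have "real p ^ m = real p ^ d * real ?q"
    using True by (simp flip: power_add)
  ultimately show ?thesis
    using prime_gt_0_nat[OF prime] by (simp add: field_simps)
next
  case False
  have "splitting_number p f m * p ^ (d - m) \<le> splitting_number p f d"
    using splitting_number_superadditive[of m "d - m"] False by simp
  then have "real (splitting_number p f m) * real p ^ (d - m) \<le> real (splitting_number p f d)"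
    by (metis of_nat_le_iff of_nat_mult of_nat_power)
  moreover have "real p ^ d = real p ^ m * real p ^ (d - m)"
    using False by (simp flip: power_add)
  ultimately show ?thesis
    using prime_gt_0_nat[OF prime] by (simp add: field_simps)
qed

lemma F_pure_pair_splitting_ratio:
  "F_pure_pair p f (real (splitting_number p f m) / real p ^ m)"
  unfolding F_pure_pair_def
proof (intro allI impI)
  fix d :: nat
  let ?r = "real (splitting_number p f m) / real p ^ m"
  have "(real p ^ d - 1) * ?r \<le> real p ^ d * ?r" by (rule mult_right_mono) simp_all
  then have "nat \<lfloor>(real p ^ d - 1) * ?r\<rfloor> \<le> splitting_number p f d"
    using scaled_splitting_ratio_less[of d m] by linarith
  then show "frob_splits p d (f ^ nat \<lfloor>(real p ^ d - 1) * ?r\<rfloor>)"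
    by (rule frob_splits_pow_le[OF frob_splits_splitting_number])
qed

text \<open>Splitting at level \<open>e + k\<close> descends to level \<open>e\<close>; let \<open>k \<rightarrow> \<infinity>\<close>.\<close>
lemma F_pure_pair_le_splitting_number:
  assumes "F_pure_pair p f \<mu>" and "0 \<le> \<mu>"
  shows "real p ^ e * \<mu> \<le> real (splitting_number p f e) + 1"
proof (rule LIMSEQ_le_const2)
  have pp: "real p > 1" using prime_gt_1_nat[OF prime] by simp
  show "(\<lambda>k. real p ^ e * \<mu> - \<mu> / real p ^ k) \<longlonglongrightarrow> real p ^ e * \<mu>"
    using tendsto_diff[OF tendsto_const tendsto_mult[OF tendsto_const LIMSEQ_inverse_realpow_zero[OF pp]]]
    by (simp add: divide_inverse)
  show "\<exists>N. \<forall>k\<ge>N. real p ^ e * \<mu> - \<mu> / real p ^ k \<le> real (splitting_number p f e) + 1"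
  proof (intro exI allI impI)
    fix k :: nat assume "k \<ge> 1"
    define x where "x = (real p ^ (e + k) - 1) * \<mu>"
    have "x \<ge> 0" unfolding x_def using assms(2) pp by simp
    have "frob_splits p (e + k) (f ^ nat \<lfloor>x\<rfloor>)"
      using assms(1) \<open>k \<ge> 1\<close> unfolding F_pure_pair_def x_def by simp
    then have "nat \<lfloor>x\<rfloor> div p ^ k \<le> splitting_number p f e"
      by (rule splitting_number_root_le)
    then have "nat \<lfloor>x\<rfloor> div p ^ k < splitting_number p f e + 1" by simp
    then have "nat \<lfloor>x\<rfloor> < (splitting_number p f e + 1) * p ^ k"
      using prime_gt_0_nat[OF prime] by (simp add: div_less_iff_less_mult)
    then have "real (nat \<lfloor>x\<rfloor> + 1) \<le> real ((splitting_number p f e + 1) * p ^ k)"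
      by (simp only: of_nat_le_iff Suc_eq_plus1 [symmetric] Suc_le_eq)
    moreover have "x < real (nat \<lfloor>x\<rfloor>) + 1"
      using \<open>x \<ge> 0\<close> by linarith
    ultimately have "x < (real (splitting_number p f e) + 1) * real p ^ k"
      by (simp add: algebra_simps)
    then show "real p ^ e * \<mu> - \<mu> / real p ^ k \<le> real (splitting_number p f e) + 1"
      unfolding x_def using pp by (simp add: power_add field_simps)
  qed
qed

lemma F_pure_pair_le_one: "F_pure_pair p f \<mu> \<Longrightarrow> 0 \<le> \<mu> \<Longrightarrow> \<mu> \<le> 1"
  using F_pure_pair_le_splitting_number[of \<mu> 0] by (simp add: splitting_number_0)

lemma bdd_above_F_pure_exponents: "bdd_above {lam. 0 \<le> lam \<and> F_pure_pair p f lam}"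
  by (rule bdd_aboveI[of _ 1]) (auto intro: F_pure_pair_le_one)

lemma splitting_ratio_le_fpt: "real (splitting_number p f m) / real p ^ m \<le> fpt p f"
  unfolding fpt_def
  by (rule cSup_upper) (simp_all add: F_pure_pair_splitting_ratio bdd_above_F_pure_exponents)

lemma fpt_nonneg: "0 \<le> fpt p f"
  using splitting_ratio_le_fpt[of 0] by (simp add: splitting_number_0)

lemma fpt_le_splitting_number: "real p ^ e * fpt p f \<le> real (splitting_number p f e) + 1"
proof -
  have "fpt p f \<le> (real (splitting_number p f e) + 1) / real p ^ e"
    unfolding fpt_def
  proof (rule cSup_least)
    show "{lam. 0 \<le> lam \<and> F_pure_pair p f lam} \<noteq> {}"
      using F_pure_pair_splitting_ratio[of 0] by (auto simp: splitting_number_0)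
  qed (use F_pure_pair_le_splitting_number prime_gt_0_nat[OF prime] in \<open>auto simp: field_simps\<close>)
  then show ?thesis using prime_gt_0_nat[OF prime] by (simp add: field_simps)
qed

lemma fpt_le_one: "fpt p f \<le> 1"
  using fpt_le_splitting_number[of 0] by (simp add: splitting_number_0)

lemma splitting_number_iterate_bound:
  "real (splitting_number p f e) * (real p ^ (k * e) - 1)
     \<le> real (splitting_number p f (k * e)) * (real p ^ e - 1)"
proof (induction k)
  case (Suc k)
  let ?s = "real (splitting_number p f e)" and ?q = "real p ^ e"
  have q1: "?q \<ge> 1" using prime_gt_0_nat[OF prime] by simp
  have "real (splitting_number p f (k * e) * p ^ e + splitting_number p f e)
      \<le> real (splitting_number p f (k * e + e))"
    by (simp only: of_nat_le_iff splitting_number_superadditive)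
  then have superadd: "real (splitting_number p f (k * e)) * ?q + ?s \<le> real (splitting_number p f (Suc k * e))"
    by (simp add: add.commute)
  have "?s * (real p ^ (Suc k * e) - 1) = ?s * (real p ^ (k * e) - 1) * ?q + ?s * (?q - 1)"
    by (simp add: power_add algebra_simps)
  also have "\<dots> \<le> real (splitting_number p f (k * e)) * (?q - 1) * ?q + ?s * (?q - 1)"
    using Suc q1 by (simp add: mult_right_mono)
  also have "\<dots> = (real (splitting_number p f (k * e)) * ?q + ?s) * (?q - 1)"
    by (simp add: algebra_simps)
  also have "\<dots> \<le> real (splitting_number p f (Suc k * e)) * (?q - 1)"
    using superadd q1 by (simp add: mult_right_mono)
  finally show ?case .
qed (simp add: splitting_number_0)

text \<open>By the previous lemma \<open>\<nu>(k e) / p\<^sup>k\<^sup>e \<ge> \<nu>(e) / (p\<^sup>e - 1) \<cdot> (1 - p\<^sup>-\<^sup>k\<^sup>e)\<close>; let \<open>k \<rightarrow> \<infinity>\<close>.\<close>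
lemma splitting_number_le_fpt:
  assumes "e \<ge> 1"
  shows "real (splitting_number p f e) \<le> (real p ^ e - 1) * fpt p f"
proof -
  let ?s = "real (splitting_number p f e)" and ?q = "real p ^ e"
  have q1: "?q > 1" using prime_gt_1_nat[OF prime] assms by simp
  have "?s / (?q - 1) \<le> fpt p f"
  proof (rule LIMSEQ_le_const2)
    show "(\<lambda>k. ?s / (?q - 1) * (1 - inverse (?q ^ k))) \<longlonglongrightarrow> ?s / (?q - 1)"
      using tendsto_mult[OF tendsto_const[of "?s / (?q - 1)"]
          tendsto_diff[OF tendsto_const[of 1] LIMSEQ_inverse_realpow_zero[OF q1]]]
      by simp
    show "\<exists>N. \<forall>k\<ge>N. ?s / (?q - 1) * (1 - inverse (?q ^ k)) \<le> fpt p f"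
    proof (intro exI allI impI)
      fix k :: nat
      let ?Q = "real p ^ (k * e)"
      have Q: "?Q = ?q ^ k" by (simp add: power_mult mult.commute)
      have "?q ^ k > 0" using prime_gt_0_nat[OF prime] by simp
      moreover have "x / (y - 1) * (1 - inverse z) = x * (z - 1) / (y - 1) / z"
        if "z > 0" "y > 1" for x y z :: real
        using that by (simp add: field_simps)
      ultimately have "?s / (?q - 1) * (1 - inverse (?q ^ k)) = ?s * (?Q - 1) / (?q - 1) / ?Q"
        unfolding Q using q1 by blast
      also have "\<dots> \<le> real (splitting_number p f (k * e)) / ?Q"
      proof (rule divide_right_mono)
        show "?s * (?Q - 1) / (?q - 1) \<le> real (splitting_number p f (k * e))"
          using splitting_number_iterate_bound[of e k] q1 by (simp add: pos_divide_le_eq)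
      qed simp
      also have "\<dots> \<le> fpt p f" by (rule splitting_ratio_le_fpt)
      finally show "?s / (?q - 1) * (1 - inverse (?q ^ k)) \<le> fpt p f" .
    qed
  qed
  then show ?thesis using q1 by (simp add: pos_divide_le_eq mult.commute)
qed

end

theorem mainTheorem5:
  fixes p e :: nat and f :: "'a::comm_ring_1" and lam :: real
  assumes "prime p"
    and "CHAR('a) = p"
    and "F_pure_ring p TYPE('a)"
    and "f \<noteq> 0" and "\<not> f dvd 1"
    and "lam = fpt p f"
    and "e \<ge> 1"
  shows "\<lfloor>(real p ^ e - 1) * lam\<rfloor> = real p ^ e * truncation p lam e
    \<and> lam \<le> real p ^ e * tail p lam e
    \<and> lam \<ge> real p ^ e / (real p ^ e - 1) * truncation p lam e"
proof -
  note setting = assms(1,2,3,5)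
  define s where "s = splitting_number p f e"
  have lower: "real s \<le> (real p ^ e - 1) * lam"
    using splitting_number_le_fpt[OF setting assms(7)] assms(6) s_def by simp
  have upper: "real p ^ e * lam \<le> real s + 1"
    using fpt_le_splitting_number[OF setting] assms(6) s_def by simp
  have q1: "real p ^ e > 1" using prime_gt_1_nat[OF assms(1)] assms(7) by simp
  show ?thesis
  proof (cases "lam = 0")
    case True
    then show ?thesis by (simp add: truncation_def tail_def)
  next
    case False
    then have pos: "0 < lam" using fpt_nonneg[OF setting] assms(6) by simp
    have p2: "p \<ge> 2" using prime_ge_2_nat[OF assms(1)] .
    have le1: "lam \<le> 1" using fpt_le_one[OF setting] assms(6) by simp
    note trunc = truncation_floor_eq_of_bounds[OF p2 pos le1 lower upper]
    show ?thesis
      using trunc lower q1 False p2 unfolding tail_def by (simp add: field_simps)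
  qed
qed

end
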